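(* Fix a partition $[n]=U\sqcup D$ into up and down indices. A join-irreducible element $\gamma$ of the weak order on $S_n$ avoids both $\bar{2}13$ and $13\underline{2}$ if and only if its associated subset is $A_{k,l}$ for some $1\le k\le l\le n-1$, where $A_{k,k}=[1,k]$ and, for $k<l$, writing $U_{k,l}=U\cap[k+1,l]$: $A_{k,l}=[1,k]\cup U_{k,l}\cup[l+1,n]$ if $k+1,l\in D$; $A_{k,l}=U_{k,l}\cup[l+1,n]$ if $k+1\in U$, $l\in D$; $A_{k,l}=[1,k]\cup U_{k,l}$ if $k+1\in D$, $l\in U$; and $A_{k,l}=U_{k,l}$ if $k+1,l\in U$.
   Context: $S_n$: permutations of $[n]$ in one-line notation $x_1\cdots x_n$; weak order $x\le y$ iff $I(x)\subseteq I(y)$, $I(x)=\{(x_j,x_i):i<j,x_i>x_j\}$. Join-irreducibles (elements covering exactly one element) correspond bijectively to subsets $A\subseteq[n]$ with $\max([n]\setminus A)>\min A$: the permutation lists $[n]\setminus A$ in increasing order followed by $A$ in increasing order; this $A$ is the associated subset. A permutation $x$ contains $\bar{2}13$ if there are $i<j<k$ with $x_j<x_i<x_k$ and $x_i\in U$; contains $13\underline{2}$ if there are $i<j<k$ with $x_i<x_k<x_j$ and $x_k\in D$; otherwise it avoids the pattern. *)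

theory Defs
  imports "HOL-Combinatorics.Combinatorics"
begin

text \<open>Permutations of [n] in one-line notation: x is a permutation of {1..n},
  x i is the entry at position i.\<close>

definition Sn :: "nat \<Rightarrow> (nat \<Rightarrow> nat) set" where
  "Sn n = {x. x permutes {1..n}}"

definition inv_set :: "nat \<Rightarrow> (nat \<Rightarrow> nat) \<Rightarrow> (nat \<times> nat) set" where
  "inv_set n x = {(x j, x i) | i j. 1 \<le> i \<and> i < j \<and> j \<le> n \<and> x i > x j}"

definition weak_le :: "nat \<Rightarrow> (nat \<Rightarrow> nat) \<Rightarrow> (nat \<Rightarrow> nat) \<Rightarrow> bool" where
  "weak_le n x y \<longleftrightarrow> inv_set n x \<subseteq> inv_set n y"

definition weak_covers :: "nat \<Rightarrow> (nat \<Rightarrow> nat) \<Rightarrow> (nat \<Rightarrow> nat) \<Rightarrow> bool" where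
  "weak_covers n y x \<longleftrightarrow> x \<in> Sn n \<and> y \<in> Sn n \<and> weak_le n x y \<and> x \<noteq> y \<and>
     (\<forall>z \<in> Sn n. weak_le n x z \<and> weak_le n z y \<longrightarrow> z = x \<or> z = y)"

definition join_irreducible :: "nat \<Rightarrow> (nat \<Rightarrow> nat) \<Rightarrow> bool" where
  "join_irreducible n y \<longleftrightarrow> y \<in> Sn n \<and> (\<exists>!x. weak_covers n y x)"

definition jirr_perm :: "nat \<Rightarrow> nat set \<Rightarrow> nat \<Rightarrow> nat" where
  "jirr_perm n A i = (if 1 \<le> i \<and> i \<le> n
     then (sorted_list_of_set ({1..n} - A) @ sorted_list_of_set A) ! (i - 1) else i)"

definition contains_bar213 :: "nat \<Rightarrow> nat set \<Rightarrow> (nat \<Rightarrow> nat) \<Rightarrow> bool" where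
  "contains_bar213 n U x \<longleftrightarrow> (\<exists>i j k. 1 \<le> i \<and> i < j \<and> j < k \<and> k \<le> n \<and>
      x j < x i \<and> x i < x k \<and> x i \<in> U)"

definition contains_132u :: "nat \<Rightarrow> nat set \<Rightarrow> (nat \<Rightarrow> nat) \<Rightarrow> bool" where
  "contains_132u n D x \<longleftrightarrow> (\<exists>i j k. 1 \<le> i \<and> i < j \<and> j < k \<and> k \<le> n \<and>
      x i < x k \<and> x k < x j \<and> x k \<in> D)"

definition A_kl :: "nat \<Rightarrow> nat set \<Rightarrow> nat \<Rightarrow> nat \<Rightarrow> nat set" where
  "A_kl n U k l =
    (if k = l then {1..k}
     else let Ukl = U \<inter> {k+1..l} in
       if k+1 \<notin> U \<and> l \<notin> U then {1..k} \<union> Ukl \<union> {l+1..n}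
       else if k+1 \<in> U \<and> l \<notin> U then Ukl \<union> {l+1..n}
       else if k+1 \<notin> U \<and> l \<in> U then {1..k} \<union> Ukl
       else Ukl)"

end

theory Submission
  imports Defs
begin

(* The permutation jirr_perm n A lists C = [n] - A increasingly and then A increasingly, so each
   of its inversions puts an entry of C before an entry of A. Hence it contains bar-213 iff some
   c in C with c in U lies strictly between two elements of A, and it contains 13-underline-2 iff
   some a in A with a in D lies strictly between two elements of C.
   With m = max (Min A) (Min C) and l = min (Max A) (Max C), all values below m have the colour
   (A or C) of 1 and all values above l that of n. If neither sandwich exists, a value in [m, l]
   lies in A exactly when it lies in U; this forces A = A_{m-1,l}, unless Max A < Min C, where
   A = [1, Max A] = A_{k,k} with k = Max A. Conversely, no A_{k,l} admits either sandwich. *)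

lemma sorted_list_of_set_shifted:
  fixes S :: "'a::linorder set"
  assumes "finite S"
  shows "strict_mono_on {a<..a + card S} (\<lambda>i. sorted_list_of_set S ! (i - Suc a))"
    and "(\<lambda>i. sorted_list_of_set S ! (i - Suc a)) ` {a<..a + card S} = S"
proof -
  let ?xs = "sorted_list_of_set S"
  show "strict_mono_on {a<..a + card S} (\<lambda>i. ?xs ! (i - Suc a))"
    by (rule strict_mono_onI) (auto intro!: sorted_wrt_nth_less[OF strict_sorted_list_of_set])
  show "(\<lambda>i. ?xs ! (i - Suc a)) ` {a<..a + card S} = S"
  proof (intro equalityI subsetI)
    fix x assume "x \<in> (\<lambda>i. ?xs ! (i - Suc a)) ` {a<..a + card S}"
    then obtain i where i: "a < i" "i \<le> a + card S" "x = ?xs ! (i - Suc a)" by auto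
    then have "i - Suc a < length ?xs" by simp
    then show "x \<in> S" using i(3) assms by (metis nth_mem set_sorted_list_of_set)
  next
    fix x assume "x \<in> S"
    then obtain j where "j < card S" "?xs ! j = x"
      using assms by (metis in_set_conv_nth length_sorted_list_of_set set_sorted_list_of_set)
    then show "x \<in> (\<lambda>i. ?xs ! (i - Suc a)) ` {a<..a + card S}"
      by (intro image_eqI[where x = "j + Suc a"]) auto
  qed
qed

lemma jirr_perm_blocks:
  assumes "A \<subseteq> {1..n}"
  defines p: "p \<equiv> card ({1..n} - A)"
  shows "strict_mono_on {0<..p} (jirr_perm n A)" and "jirr_perm n A ` {0<..p} = {1..n} - A"
    and "strict_mono_on {p<..n} (jirr_perm n A)" and "jirr_perm n A ` {p<..n} = A"
proof -
  let ?C = "{1..n} - A"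
  have "finite A" using assms(1) finite_subset by blast
  have "card A \<le> n" using card_mono[OF _ assms(1)] by simp
  then have n: "p + card A = n" using p \<open>finite A\<close> assms(1) by (simp add: card_Diff_subset)
  have low: "jirr_perm n A i = sorted_list_of_set ?C ! (i - Suc 0)" if "i \<in> {0<..0 + card ?C}" for i
    using that p n by (auto simp: jirr_perm_def nth_append)
  have high: "jirr_perm n A i = sorted_list_of_set A ! (i - Suc p)" if "i \<in> {p<..p + card A}" for i
    using that p n by (auto simp: jirr_perm_def nth_append)
  note C_run = sorted_list_of_set_shifted[of ?C 0] and A_run = sorted_list_of_set_shifted[OF \<open>finite A\<close>, of p]
  show "strict_mono_on {0<..p} (jirr_perm n A)"
    using C_run(1) p by (auto simp: strict_mono_on_def low)
  have "jirr_perm n A ` {0<..p} = (\<lambda>i. sorted_list_of_set ?C ! (i - Suc 0)) ` {0<..0 + card ?C}"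
    using p low by (intro image_cong) auto
  then show "jirr_perm n A ` {0<..p} = ?C"
    using C_run(2) by simp
  show "strict_mono_on {p<..n} (jirr_perm n A)"
    using A_run(1) n by (auto simp: strict_mono_on_def high)
  have "jirr_perm n A ` {p<..n} = (\<lambda>i. sorted_list_of_set A ! (i - Suc p)) ` {p<..p + card A}"
    using n high by (intro image_cong) auto
  then show "jirr_perm n A ` {p<..n} = A"
    using A_run(2) by simp
qed

lemma inversion_straddles_blocks:
  fixes x :: "nat \<Rightarrow> 'a::linorder"
  assumes "strict_mono_on {0<..p} x" and "strict_mono_on {p<..n} x"
    and "0 < i" and "i < j" and "j \<le> n" and "x j < x i"
  shows "i \<le> p" and "p < j"
proof -
  show "p < j"
  proof (rule ccontr)
    assume "\<not> p < j"
    then have "x i < x j" using assms(3,4) by (intro strict_mono_onD[OF assms(1)]) auto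
    then show False using assms(6) by simp
  qed
  show "i \<le> p"
  proof (rule ccontr)
    assume "\<not> i \<le> p"
    then have "x i < x j" using assms(4,5) by (intro strict_mono_onD[OF assms(2)]) auto
    then show False using assms(6) by simp
  qed
qed

definition sandwiched_by :: "'a::ord set \<Rightarrow> 'a \<Rightarrow> bool" where
  "sandwiched_by S v \<longleftrightarrow> (\<exists>a\<in>S. \<exists>b\<in>S. a < v \<and> v < b)"

lemma contains_bar213_two_blocks:
  fixes x :: "nat \<Rightarrow> nat"
  assumes "strict_mono_on {0<..p} x" and "strict_mono_on {p<..n} x"
  shows "contains_bar213 n U x \<longleftrightarrow> (\<exists>c \<in> x ` {0<..p} \<inter> U. sandwiched_by (x ` {p<..n}) c)"
proof
  assume "contains_bar213 n U x"
  then obtain i j k where ijk: "1 \<le> i" "i < j" "j < k" "k \<le> n" "x j < x i" "x i < x k" "x i \<in> U"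
    unfolding contains_bar213_def by blast
  then have "i \<le> p" "p < j" using inversion_straddles_blocks[OF assms, of i j] by auto
  then have "x i \<in> x ` {0<..p} \<inter> U" "x j \<in> x ` {p<..n}" "x k \<in> x ` {p<..n}" using ijk by auto
  then show "\<exists>c \<in> x ` {0<..p} \<inter> U. sandwiched_by (x ` {p<..n}) c"
    unfolding sandwiched_by_def using ijk by blast
next
  assume "\<exists>c \<in> x ` {0<..p} \<inter> U. sandwiched_by (x ` {p<..n}) c"
  then obtain i j k where ijk: "i \<in> {0<..p}" "x i \<in> U" "j \<in> {p<..n}" "k \<in> {p<..n}"
      "x j < x i" "x i < x k"
    unfolding sandwiched_by_def by blast
  then have "j < k" using strict_mono_on_less[OF assms(2)] by (meson order.strict_trans)
  then show "contains_bar213 n U x"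
    unfolding contains_bar213_def using ijk by (intro exI[of _ i] exI[of _ j] exI[of _ k]) auto
qed

lemma contains_132u_two_blocks:
  fixes x :: "nat \<Rightarrow> nat"
  assumes "strict_mono_on {0<..p} x" and "strict_mono_on {p<..n} x"
  shows "contains_132u n D x \<longleftrightarrow> (\<exists>a \<in> x ` {p<..n} \<inter> D. sandwiched_by (x ` {0<..p}) a)"
proof
  assume "contains_132u n D x"
  then obtain i j k where ijk: "1 \<le> i" "i < j" "j < k" "k \<le> n" "x i < x k" "x k < x j" "x k \<in> D"
    unfolding contains_132u_def by blast
  then have "j \<le> p" "p < k" using inversion_straddles_blocks[OF assms, of j k] by auto
  then have "x k \<in> x ` {p<..n} \<inter> D" "x i \<in> x ` {0<..p}" "x j \<in> x ` {0<..p}" using ijk by auto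
  then show "\<exists>a \<in> x ` {p<..n} \<inter> D. sandwiched_by (x ` {0<..p}) a"
    unfolding sandwiched_by_def using ijk by blast
next
  assume "\<exists>a \<in> x ` {p<..n} \<inter> D. sandwiched_by (x ` {0<..p}) a"
  then obtain i j k where ijk: "k \<in> {p<..n}" "x k \<in> D" "i \<in> {0<..p}" "j \<in> {0<..p}"
      "x i < x k" "x k < x j"
    unfolding sandwiched_by_def by blast
  then have "i < j" using strict_mono_on_less[OF assms(1)] by (meson order.strict_trans)
  then show "contains_132u n D x"
    unfolding contains_132u_def using ijk by (intro exI[of _ i] exI[of _ j] exI[of _ k]) auto
qed

lemma mem_A_kl:
  assumes "k < l"
  shows "v \<in> A_kl n U k l \<longleftrightarrow>
    (1 \<le> v \<and> v \<le> k \<and> k + 1 \<notin> U) \<or> (k < v \<and> v \<le> l \<and> v \<in> U) \<or> (l < v \<and> v \<le> n \<and> l \<notin> U)"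
  using assms unfolding A_kl_def Let_def by auto

lemma A_kl_diag: "A_kl n U k k = {1..k}"
  by (simp add: A_kl_def)

lemma A_kl_no_up_sandwich:
  assumes "k \<le> l" and "c \<in> ({1..n} - A_kl n U k l) \<inter> U"
  shows "\<not> sandwiched_by (A_kl n U k l) c"
  using assms by (cases "k = l") (auto simp: A_kl_diag mem_A_kl sandwiched_by_def)

lemma A_kl_no_down_sandwich:
  assumes "k \<le> l" and "a \<in> A_kl n U k l - U"
  shows "\<not> sandwiched_by ({1..n} - A_kl n U k l) a"
  using assms by (cases "k = l") (auto simp: A_kl_diag mem_A_kl sandwiched_by_def)

lemma initial_run:
  fixes A :: "nat set"
  assumes "A \<subseteq> {1..n}" and "A \<noteq> {}" and "{1..n} - A \<noteq> {}"
  defines "m \<equiv> max (Min A) (Min ({1..n} - A))"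
  shows "1 < m" and "m \<le> n" and "m \<in> A \<longleftrightarrow> 1 \<notin> A"
    and "\<And>v. 1 \<le> v \<Longrightarrow> v < m \<Longrightarrow> v \<in> A \<longleftrightarrow> 1 \<in> A"
proof -
  let ?C = "{1..n} - A"
  have "finite A" using assms(1) finite_subset by blast
  note A = Min_in[OF this assms(2)] Min_le[OF this]
  have "finite ?C" by simp
  note C = Min_in[OF this assms(3)] Min_le[OF this]
  have "1 \<le> n" using A(1) assms(1) by auto
  consider "1 \<in> A" "m = Min ?C" "1 < Min ?C" | "1 \<notin> A" "m = Min A" "1 < Min A"
  proof (cases "1 \<in> A")
    case True
    have "Min A = 1" using A True assms(1) by (meson atLeastAtMost_iff le_antisym subsetD)
    have "1 < Min ?C" using C(1) True by (metis Diff_iff atLeastAtMost_iff le_neq_implies_less)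
    show ?thesis using True that(1) \<open>Min A = 1\<close> \<open>1 < Min ?C\<close> unfolding m_def by simp
  next
    case False
    have "Min ?C = 1" using C False \<open>1 \<le> n\<close> by (meson Diff_iff atLeastAtMost_iff le_antisym order_refl)
    have "1 < Min A" using A(1) False assms(1) by (metis atLeastAtMost_iff le_neq_implies_less subsetD)
    show ?thesis using False that(2) \<open>Min ?C = 1\<close> \<open>1 < Min A\<close> unfolding m_def by simp
  qed
  note m_cases = this
  show "1 < m" by (rule m_cases) simp_all
  show "m \<le> n" by (rule m_cases) (use A(1) C(1) assms(1) in auto)
  show "m \<in> A \<longleftrightarrow> 1 \<notin> A" by (rule m_cases) (use A(1) C(1) in auto)
  show "v \<in> A \<longleftrightarrow> 1 \<in> A" if "1 \<le> v" "v < m" for v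
  proof (rule m_cases)
    assume "1 \<in> A" "m = Min ?C"
    then have "v \<notin> ?C" using C(2) that(2) by (meson leD)
    then show ?thesis using \<open>1 \<in> A\<close> that \<open>m \<le> n\<close> by auto
  next
    assume "1 \<notin> A" "m = Min A"
    then show ?thesis using A(2) that(2) by (meson leD)
  qed
qed

lemma final_run:
  fixes A :: "nat set"
  assumes "A \<subseteq> {1..n}" and "A \<noteq> {}" and "{1..n} - A \<noteq> {}"
  defines "l \<equiv> min (Max A) (Max ({1..n} - A))"
  shows "1 \<le> l" and "l < n" and "l \<in> A \<longleftrightarrow> n \<notin> A"
    and "\<And>v. l < v \<Longrightarrow> v \<le> n \<Longrightarrow> v \<in> A \<longleftrightarrow> n \<in> A"
proof -
  let ?C = "{1..n} - A"
  have "finite A" using assms(1) finite_subset by blast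
  note A = Max_in[OF this assms(2)] Max_ge[OF this]
  have "finite ?C" by simp
  note C = Max_in[OF this assms(3)] Max_ge[OF this]
  have "1 \<le> n" using A(1) assms(1) by auto
  consider "n \<in> A" "l = Max ?C" "Max ?C < n" | "n \<notin> A" "l = Max A" "Max A < n"
  proof (cases "n \<in> A")
    case True
    have "Max A = n" using A True assms(1) by (meson atLeastAtMost_iff le_antisym subsetD)
    have "Max ?C < n" using C(1) True by (metis Diff_iff atLeastAtMost_iff le_neq_implies_less)
    show ?thesis using True that(1) \<open>Max A = n\<close> \<open>Max ?C < n\<close> unfolding l_def by simp
  next
    case False
    have "Max ?C = n" using C False \<open>1 \<le> n\<close> by (meson Diff_iff atLeastAtMost_iff le_antisym order_refl)
    have "Max A < n" using A(1) False assms(1) by (metis atLeastAtMost_iff le_neq_implies_less subsetD)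
    show ?thesis using False that(2) \<open>Max ?C = n\<close> \<open>Max A < n\<close> unfolding l_def by simp
  qed
  note l_cases = this
  show "l < n" by (rule l_cases) simp_all
  show "1 \<le> l" by (rule l_cases) (use A(1) C(1) assms(1) in auto)
  show "l \<in> A \<longleftrightarrow> n \<notin> A" by (rule l_cases) (use A(1) C(1) in auto)
  show "v \<in> A \<longleftrightarrow> n \<in> A" if "l < v" "v \<le> n" for v
  proof (rule l_cases)
    assume "n \<in> A" "l = Max ?C"
    then have "v \<notin> ?C" using C(2) that(1) by (meson leD)
    then show ?thesis using \<open>n \<in> A\<close> that \<open>1 \<le> l\<close> by auto
  next
    assume "n \<notin> A" "l = Max A"
    then show ?thesis using A(2) that(1) by (meson leD)
  qed
qed

lemma middle_run:
  fixes A :: "nat set"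
  assumes "A \<subseteq> {1..n}" and "A \<noteq> {}" and "{1..n} - A \<noteq> {}"
    and up: "\<forall>c \<in> ({1..n} - A) \<inter> U. \<not> sandwiched_by A c"
    and down: "\<forall>a \<in> A - U. \<not> sandwiched_by ({1..n} - A) a"
    and lo: "max (Min A) (Min ({1..n} - A)) \<le> v" and hi: "v \<le> min (Max A) (Max ({1..n} - A))"
  shows "v \<in> A \<longleftrightarrow> v \<in> U"
proof -
  let ?C = "{1..n} - A"
  have "finite A" using assms(1) finite_subset by blast
  note A = Min_in[OF this assms(2)] Max_in[OF this assms(2)]
  have "finite ?C" by simp
  note C = Min_in[OF this assms(3)] Max_in[OF this assms(3)]
  have "1 \<le> Min A" "Max ?C \<le> n" using A(1) C(2) assms(1) by auto
  then have "v \<in> {1..n}" using lo hi by simp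
  show ?thesis
  proof
    assume "v \<in> A"
    then have "Min ?C \<noteq> v" "Max ?C \<noteq> v" using C by auto
    then have "Min ?C < v" "v < Max ?C" using lo hi by simp_all
    then have "sandwiched_by ?C v" unfolding sandwiched_by_def using C by blast
    then show "v \<in> U" using down \<open>v \<in> A\<close> by blast
  next
    assume "v \<in> U"
    show "v \<in> A"
    proof (rule ccontr)
      assume "v \<notin> A"
      then have "Min A \<noteq> v" "Max A \<noteq> v" using A by auto
      then have "Min A < v" "v < Max A" using lo hi by simp_all
      then have "sandwiched_by A v" unfolding sandwiched_by_def using A by blast
      then show False using up \<open>v \<in> U\<close> \<open>v \<in> {1..n}\<close> \<open>v \<notin> A\<close> by blast
    qed
  qed
qed

lemma eq_A_kl_if_runs:
  assumes "A \<subseteq> {1..n}" and "k < l" and "l \<le> n"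
    and "\<And>v. 1 \<le> v \<Longrightarrow> v \<le> k \<Longrightarrow> v \<in> A \<longleftrightarrow> k + 1 \<notin> U"
    and "\<And>v. k < v \<Longrightarrow> v \<le> l \<Longrightarrow> v \<in> A \<longleftrightarrow> v \<in> U"
    and "\<And>v. l < v \<Longrightarrow> v \<le> n \<Longrightarrow> v \<in> A \<longleftrightarrow> l \<notin> U"
  shows "A = A_kl n U k l"
proof (rule set_eqI)
  fix v
  consider "v < 1 \<or> n < v" | "1 \<le> v" "v \<le> k" | "k < v" "v \<le> l" | "l < v" "v \<le> n"
    by linarith
  then show "v \<in> A \<longleftrightarrow> v \<in> A_kl n U k l"
  proof cases
    case 1
    then show ?thesis using assms(1-3) by (auto simp: mem_A_kl[OF assms(2)])
  next
    case 2
    then show ?thesis using assms(4)[of v] assms(2) by (auto simp: mem_A_kl[OF assms(2)])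
  next
    case 3
    then show ?thesis using assms(5)[of v] assms(3) by (auto simp: mem_A_kl[OF assms(2)])
  next
    case 4
    then show ?thesis using assms(6)[of v] assms(2) by (auto simp: mem_A_kl[OF assms(2)])
  qed
qed

lemma initial_segment_if_Max_less_Min_compl:
  fixes A :: "nat set"
  assumes "A \<subseteq> {1..n}" and "A \<noteq> {}" and "Max A < Min ({1..n} - A)"
  shows "A = {1..Max A}"
proof
  have "finite A" using assms(1) finite_subset by blast
  then show "A \<subseteq> {1..Max A}" using assms(1) by auto
  show "{1..Max A} \<subseteq> A"
  proof
    fix v assume v: "v \<in> {1..Max A}"
    have "v \<le> n" using v Max_in[OF \<open>finite A\<close> assms(2)] assms(1) by auto
    have "v < Min ({1..n} - A)" using v assms(3) by simp
    then have "v \<notin> {1..n} - A" using Min_le[of "{1..n} - A" v] by (meson finite_Diff finite_atLeastAtMost leD)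
    with v \<open>v \<le> n\<close> show "v \<in> A" by auto
  qed
qed

lemma no_sandwich_imp_A_kl:
  fixes A :: "nat set"
  assumes A: "A \<subseteq> {1..n}" "A \<noteq> {}" "{1..n} - A \<noteq> {}"
    and nontrivial: "Min A < Max ({1..n} - A)"
    and up: "\<forall>c \<in> ({1..n} - A) \<inter> U. \<not> sandwiched_by A c"
    and down: "\<forall>a \<in> A - U. \<not> sandwiched_by ({1..n} - A) a"
  shows "\<exists>k l. 1 \<le> k \<and> k \<le> l \<and> l \<le> n - 1 \<and> A = A_kl n U k l"
proof -
  let ?C = "{1..n} - A"
  have "finite A" using A(1) finite_subset by blast
  note A_bounds = Min_in[OF this A(2)] Max_in[OF this A(2)] Min_le[OF this] Max_ge[OF this]
  have "finite ?C" by simp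
  note C_bounds = Min_in[OF this A(3)] Max_in[OF this A(3)] Min_le[OF this] Max_ge[OF this]
  show ?thesis
  proof (cases "Max A < Min ?C")
    case True
    then have "A = A_kl n U (Max A) (Max A)"
      using initial_segment_if_Max_less_Min_compl[OF A(1,2)] by (simp add: A_kl_diag)
    moreover have "1 \<le> Max A" "Max A \<le> n - 1" using True A_bounds(2) C_bounds(1) A(1) by auto
    ultimately show ?thesis by blast
  next
    case False
    define m where "m = max (Min A) (Min ?C)"
    define l where "l = min (Max A) (Max ?C)"
    note init = initial_run[OF A, folded m_def] and fin = final_run[OF A, folded l_def]
    have "m \<le> l"
      using False nontrivial A_bounds C_bounds unfolding m_def l_def by auto
    have mid: "v \<in> A \<longleftrightarrow> v \<in> U" if "m \<le> v" "v \<le> l" for v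
      using middle_run[OF A up down] that unfolding m_def l_def by blast
    have "m - 1 + 1 = m" using init(1) by simp
    have "A = A_kl n U (m - 1) l"
    proof (rule eq_A_kl_if_runs)
      show "v \<in> A \<longleftrightarrow> m - 1 + 1 \<notin> U" if "1 \<le> v" "v \<le> m - 1" for v
        using init(3) init(4)[of v] mid[of m] \<open>m \<le> l\<close> that \<open>m - 1 + 1 = m\<close> by auto
      show "v \<in> A \<longleftrightarrow> l \<notin> U" if "l < v" "v \<le> n" for v
        using fin(3) fin(4)[of v] mid[of l] \<open>m \<le> l\<close> that by auto
      show "v \<in> A \<longleftrightarrow> v \<in> U" if "m - 1 < v" "v \<le> l" for v
        using mid that by simp
    qed (use A(1) init(1) fin(2) \<open>m \<le> l\<close> in auto)
    then show ?thesis using init(1) fin(2) \<open>m \<le> l\<close> by (intro exI[of _ "m - 1"] exI[of _ l]) auto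
  qed
qed

lemma no_sandwich_iff_A_kl:
  fixes A :: "nat set"
  assumes "A \<subseteq> {1..n}" and "A \<noteq> {}" and "{1..n} - A \<noteq> {}"
    and "Min A < Max ({1..n} - A)"
  shows "\<not> (\<exists>c \<in> ({1..n} - A) \<inter> U. sandwiched_by A c) \<and> \<not> (\<exists>a \<in> A - U. sandwiched_by ({1..n} - A) a)
    \<longleftrightarrow> (\<exists>k l. 1 \<le> k \<and> k \<le> l \<and> l \<le> n - 1 \<and> A = A_kl n U k l)" (is "?no_sandwich \<longleftrightarrow> _")
proof
  assume ?no_sandwich
  then show "\<exists>k l. 1 \<le> k \<and> k \<le> l \<and> l \<le> n - 1 \<and> A = A_kl n U k l"
    using no_sandwich_imp_A_kl[OF assms] by blast
next
  assume "\<exists>k l. 1 \<le> k \<and> k \<le> l \<and> l \<le> n - 1 \<and> A = A_kl n U k l"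
  then obtain k l where "k \<le> l" and "A = A_kl n U k l" by blast
  then show ?no_sandwich using A_kl_no_up_sandwich A_kl_no_down_sandwich by blast
qed

theorem proposition9p3:
  fixes n :: nat and U D :: "nat set" and \<gamma> :: "nat \<Rightarrow> nat" and A :: "nat set"
  assumes "U \<union> D = {1..n}" and "U \<inter> D = {}"
    and "join_irreducible n \<gamma>"
    and "A \<subseteq> {1..n}" and "A \<noteq> {}" and "{1..n} - A \<noteq> {}"
    and "Max ({1..n} - A) > Min A"
    and "\<gamma> = jirr_perm n A"
  shows "(\<not> contains_bar213 n U \<gamma> \<and> \<not> contains_132u n D \<gamma>) \<longleftrightarrow>
         (\<exists>k l. 1 \<le> k \<and> k \<le> l \<and> l \<le> n - 1 \<and> A = A_kl n U k l)"
proof -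
  note blocks = jirr_perm_blocks[OF assms(4)]
  have "A \<inter> D = A - U" using assms(1,2,4) by blast
  then have "contains_132u n D \<gamma> \<longleftrightarrow> (\<exists>a \<in> A - U. sandwiched_by ({1..n} - A) a)"
    unfolding assms(8) contains_132u_two_blocks[OF blocks(1,3)] blocks(2,4) by simp
  moreover have "contains_bar213 n U \<gamma> \<longleftrightarrow> (\<exists>c \<in> ({1..n} - A) \<inter> U. sandwiched_by A c)"
    unfolding assms(8) contains_bar213_two_blocks[OF blocks(1,3)] blocks(2,4) ..
  ultimately show ?thesis
    using no_sandwich_iff_A_kl[OF assms(4-7)] by (simp only:)
qed

end
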